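(* In the labelled calculus $\mathbf{G3I}$, the rules $L\prec$: from $x\prec y,\Sigma;\underline{\Gamma},x:A,y:A\Rightarrow\underline{\Delta}$ infer $x\prec y,\Sigma;\underline{\Gamma},x:A\Rightarrow\underline{\Delta}$, and $R\prec$: from $x\prec y,\Sigma;\underline{\Gamma}\Rightarrow\underline{\Delta},x:A,y:A$ infer $x\prec y,\Sigma;\underline{\Gamma}\Rightarrow\underline{\Delta},y:A$ are admissible (whenever the premiss is derivable, so is the conclusion), for arbitrary formulae $A$.
   Context: Formulae are propositional formulae built from atoms, $\bot$, $\land$, $\lor$, $\supset$; labelled formulae are $x:A$ with $x$ a label. A labelled sequent is $\Sigma;\underline{\Gamma}\Rightarrow\underline{\Delta}$ with $\Sigma$ a finite multiset of relational formulae $x\prec y$ and $\underline{\Gamma},\underline{\Delta}$ finite multisets of labelled formulae; $S$ stands for $\underline{\Gamma}\Rightarrow\underline{\Delta}$. The rules of $\mathbf{G3I}$ ($P$ atomic): Ax: $x\prec y,\Sigma;x:P,\underline{\Gamma}\Rightarrow y:P,\underline{\Delta}$; L$\bot$: $\Sigma;x:\bot,\underline{\Gamma}\Rightarrow\underline{\Delta}$; L$\land$: from $\Sigma;\underline{\Gamma},x:A,x:B\Rightarrow\underline{\Delta}$ infer $\Sigma;\underline{\Gamma},x:(A\land B)\Rightarrow\underline{\Delta}$; R$\land$: from $\Sigma;\underline{\Gamma}\Rightarrow x:A,\underline{\Delta}$ and $\Sigma;\underline{\Gamma}\Rightarrow x:B,\underline{\Delta}$ infer $\Sigma;\underline{\Gamma}\Rightarrow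 x:(A\land B),\underline{\Delta}$; L$\lor$: from $\Sigma;\underline{\Gamma},x:A\Rightarrow\underline{\Delta}$ and $\Sigma;\underline{\Gamma},x:B\Rightarrow\underline{\Delta}$ infer $\Sigma;\underline{\Gamma},x:(A\lor B)\Rightarrow\underline{\Delta}$; R$\lor$: from $\Sigma;\underline{\Gamma}\Rightarrow x:A,x:B,\underline{\Delta}$ infer $\Sigma;\underline{\Gamma}\Rightarrow x:(A\lor B),\underline{\Delta}$; L$\supset$: from $x\prec y,\Sigma;x:(A\supset B),\underline{\Gamma}\Rightarrow\underline{\Delta},y:A$ and $x\prec y,\Sigma;x:(A\supset B),y:B,\underline{\Gamma}\Rightarrow\underline{\Delta}$ infer $x\prec y,\Sigma;x:(A\supset B),\underline{\Gamma}\Rightarrow\underline{\Delta}$; R$\supset$: from $x\prec y,\Sigma;y:A,\underline{\Gamma}\Rightarrow\underline{\Delta},y:B$ infer $\Sigma;\underline{\Gamma}\Rightarrow\underline{\Delta},x:(A\supset B)$, with $y$ fresh; refl: from $x\prec x,\Sigma;S$ infer $\Sigma;S$; trans: from $x\prec y,y\prec z,x\prec z,\Sigma;S$ infer $x\prec y,y\prec z,\Sigma;S$. *)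

theory Defs
  imports Main "HOL-Library.Multiset"
begin

datatype form = Atm nat | Bot | Conj form form | Disj form form | Imp form form

type_synonym label = nat
type_synonym rel = "label \<times> label"          (* (x,y) stands for x \<prec> y *)
type_synonym lform = "label \<times> form"         (* (x,A) stands for x : A *)

definition labels_rel :: "rel multiset \<Rightarrow> label set" where
  "labels_rel S = fst ` set_mset S \<union> snd ` set_mset S"

definition labels_fm :: "lform multiset \<Rightarrow> label set" where
  "labels_fm G = fst ` set_mset G"

inductive G3I :: "rel multiset \<Rightarrow> lform multiset \<Rightarrow> lform multiset \<Rightarrow> bool" where
  Ax: "G3I (add_mset (x,y) S) (add_mset (x, Atm P) G) (add_mset (y, Atm P) D)"
| LBot: "G3I S (add_mset (x, Bot) G) D"
| LConj: "G3I S (G + {#(x,A), (x,B)#}) D \<Longrightarrow> G3I S (add_mset (x, Conj A B) G) D"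
| RConj: "G3I S G (add_mset (x,A) D) \<Longrightarrow> G3I S G (add_mset (x,B) D)
          \<Longrightarrow> G3I S G (add_mset (x, Conj A B) D)"
| LDisj: "G3I S (add_mset (x,A) G) D \<Longrightarrow> G3I S (add_mset (x,B) G) D
          \<Longrightarrow> G3I S (add_mset (x, Disj A B) G) D"
| RDisj: "G3I S G ({#(x,A), (x,B)#} + D) \<Longrightarrow> G3I S G (add_mset (x, Disj A B) D)"
| LImp: "G3I (add_mset (x,y) S) (add_mset (x, Imp A B) G) (add_mset (y,A) D)
         \<Longrightarrow> G3I (add_mset (x,y) S) (add_mset (x, Imp A B) (add_mset (y,B) G)) D
         \<Longrightarrow> G3I (add_mset (x,y) S) (add_mset (x, Imp A B) G) D"
| RImp: "y \<notin> labels_rel S \<Longrightarrow> y \<notin> labels_fm G \<Longrightarrow> y \<notin> labels_fm D \<Longrightarrow> y \<noteq> x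
         \<Longrightarrow> G3I (add_mset (x,y) S) (add_mset (y,A) G) (add_mset (y,B) D)
         \<Longrightarrow> G3I S G (add_mset (x, Imp A B) D)"
| Refl: "G3I (add_mset (x,x) S) G D \<Longrightarrow> G3I S G D"
| Trans: "G3I ({#(x,y), (y,z), (x,z)#} + S) G D \<Longrightarrow> G3I ({#(x,y), (y,z)#} + S) G D"

end

theory Submission
  imports Defs
begin

text \<open>
  For an atom or an implication on the left (an atom
  or \<bottom> on the right) an induction on the derivation suffices: the extra occurrence of y : A
  (resp. x : A) can only be principal in an axiom or in L\<supset>, and there the relational atom
  x \<prec> y and the transitivity rule let the other occurrence play its part. For the remaining
  connectives the invertibility of the logical rules reduces the claim to the immediate
  subformulae. R\<prec> for B \<supset> C inverts both x : B \<supset> C and y : B \<supset> C with fresh eigenvariables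
  and then identifies them; the resulting duplicates of B and C at one world are contracted by
  L\<prec> and the induction hypothesis for C, instantiated with a reflexive atom v \<prec> v.
\<close>

section \<open>Labels, substitution and weakening\<close>

lemma labels_rel_simps [simp]:
  "labels_rel {#} = {}"
  "labels_rel (add_mset (a,b) S) = insert a (insert b (labels_rel S))"
  "labels_rel (S + T) = labels_rel S \<union> labels_rel T"
  by (auto simp: labels_rel_def)

lemma labels_fm_simps [simp]:
  "labels_fm {#} = {}"
  "labels_fm (add_mset (a,A) G) = insert a (labels_fm G)"
  "labels_fm (G + H) = labels_fm G \<union> labels_fm H"
  by (auto simp: labels_fm_def)

lemma finite_labels [simp]: "finite (labels_rel S)" "finite (labels_fm G)"
  by (simp_all add: labels_rel_def labels_fm_def)

lemma mem_labels_rel: "(a,b) \<in># S \<Longrightarrow> a \<in> labels_rel S \<and> b \<in> labels_rel S"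
  by (force simp: labels_rel_def)

lemma mem_labels_fm: "(a,A) \<in># G \<Longrightarrow> a \<in> labels_fm G"
  by (force simp: labels_fm_def)

lemma obtain_fresh_label:
  fixes X :: "label set"
  assumes "finite X"
  obtains w where "w \<notin> X"
  using assms ex_new_if_finite infinite_UNIV_nat by blast

lemma add_mset_eq_add_mset_mem: "add_mset p M = add_mset q N \<Longrightarrow> p \<noteq> q \<Longrightarrow> p \<in># N"
  by (metis insert_noteq_member union_single_eq_member)

lemma add_mset_eq_union_pair:
  assumes "add_mset p M = N + {#q, r#}" and "p \<noteq> q" and "p \<noteq> r"
  obtains K where "N = add_mset p K" and "M = K + {#q, r#}"
proof -
  have "p \<in># add_mset p M"
    by simp
  then have "p \<in># N + {#q, r#}"
    by (simp only: assms(1))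
  then have "p \<in># N"
    using assms(2,3) by auto
  then obtain K where "N = add_mset p K"
    by (metis multi_member_split)
  with assms(1) show ?thesis
    using that by simp
qed

lemma G3I_Ax_mem: "(x,y) \<in># S \<Longrightarrow> (x, Atm P) \<in># G \<Longrightarrow> (y, Atm P) \<in># D \<Longrightarrow> G3I S G D"
  by (metis G3I.Ax multi_member_split)

lemma G3I_LBot_mem: "(x, Bot) \<in># G \<Longrightarrow> G3I S G D"
  by (metis G3I.LBot multi_member_split)

lemma G3I_LImp_mem:
  assumes "G3I S G (add_mset (y,A) D)" and "G3I S (add_mset (y,B) G) D"
    and "(x,y) \<in># S" and "(x, Imp A B) \<in># G"
  shows "G3I S G D"
proof -
  obtain S' G' where "S = add_mset (x,y) S'" "G = add_mset (x, Imp A B) G'"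
    using assms(3,4) by (metis multi_member_split)
  with assms(1,2) show ?thesis
    using G3I.LImp[of x y S' A B G' D] by (simp add: add_mset_commute)
qed

lemma image_mset_fix_rel:
  "(\<And>a. a \<in> labels_rel S \<Longrightarrow> f a = a) \<Longrightarrow> image_mset (map_prod f f) S = S"
  by (induction S) auto

lemma image_mset_fix_fm:
  "(\<And>a. a \<in> labels_fm G \<Longrightarrow> f a = a) \<Longrightarrow> image_mset (apfst f) G = G"
  by (induction G) (auto simp: apfst_def)

lemma G3I_subst_weaken:
  "G3I S G D \<Longrightarrow>
   G3I (image_mset (map_prod f f) S + S') (image_mset (apfst f) G + G') (image_mset (apfst f) D + D')"
proof (induction arbitrary: f S' G' D' rule: G3I.induct)
  case (Ax x y S P G D)
  then show ?case by (simp add: G3I.Ax)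
next
  case (LBot S x G D)
  then show ?case by (simp add: G3I.LBot)
next
  case (LConj S G x A B D)
  show ?case
    using LConj.IH[of f S' G' D'] by (simp add: G3I.LConj)
next
  case (RConj S G x A D B)
  show ?case
    using RConj.IH[of f S' G' D'] by (simp add: G3I.RConj)
next
  case (LDisj S x A G D B)
  show ?case
    using LDisj.IH[of f S' G' D'] by (simp add: G3I.LDisj)
next
  case (RDisj S G x A B D)
  show ?case
    using RDisj.IH[of f S' G' D'] by (simp add: G3I.RDisj)
next
  case (LImp x y S A B G D)
  show ?case
    using LImp.IH[of f S' G' D'] by (simp add: G3I.LImp)
next
  case (RImp y S G D x A B)
  let ?S = "image_mset (map_prod f f) S + S'"
  let ?G = "image_mset (apfst f) G + G'"
  let ?D = "image_mset (apfst f) D + D'"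
  obtain z where z: "z \<notin> labels_rel ?S \<union> labels_fm ?G \<union> labels_fm ?D \<union> {f x}"
    using obtain_fresh_label[of "labels_rel ?S \<union> labels_fm ?G \<union> labels_fm ?D \<union> {f x}"] by auto
  \<comment> \<open>the eigenvariable is sent to a label fresh for the weakened conclusion\<close>
  let ?g = "f(y := z)"
  have "image_mset (map_prod ?g ?g) S = image_mset (map_prod f f) S"
    "image_mset (apfst ?g) G = image_mset (apfst f) G"
    "image_mset (apfst ?g) D = image_mset (apfst f) D"
    using RImp.hyps(1-3) mem_labels_rel mem_labels_fm
    by (auto intro!: image_mset_cong simp: apfst_def map_prod_def split: prod.splits)
  then have "G3I (add_mset (f x, z) ?S) (add_mset (z,A) ?G) (add_mset (z,B) ?D)"
    using RImp.IH[of ?g S' G' D'] RImp.hyps(4)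
    by (simp del: fun_upd_apply add: fun_upd_same fun_upd_other[of x y f z])
  then have "G3I ?S ?G (add_mset (f x, Imp A B) ?D)"
    using z by (intro G3I.RImp) auto
  then show ?case by simp
next
  case (Refl x S G D)
  show ?case
    using Refl.IH[of f S' G' D'] by (simp add: G3I.Refl[of "f x"])
next
  case (Trans x y z S G D)
  show ?case
    using Trans.IH[of f S' G' D'] G3I.Trans[of "f x" "f y" "f z" "image_mset (map_prod f f) S + S'"]
    by simp
qed

lemma G3I_weaken_rel: "G3I S G D \<Longrightarrow> G3I (add_mset p S) G D"
  using G3I_subst_weaken[of S G D id "{#p#}" "{#}" "{#}"] by (simp add: map_prod.id)

lemma G3I_rename:
  assumes "G3I (S + S') (G + G') (D + D')"
    and "\<And>a. a \<in> labels_rel S \<union> labels_fm G \<union> labels_fm D \<Longrightarrow> f a = a"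
  shows "G3I (S + image_mset (map_prod f f) S') (G + image_mset (apfst f) G') (D + image_mset (apfst f) D')"
proof -
  have "image_mset (map_prod f f) S = S" "image_mset (apfst f) G = G" "image_mset (apfst f) D = D"
    using assms(2) by (auto intro!: image_mset_fix_rel image_mset_fix_fm)
  with G3I_subst_weaken[OF assms(1), of f "{#}" "{#}" "{#}"] show ?thesis
    by simp
qed

lemma G3I_trans_mem:
  assumes "G3I (add_mset (x,z) S) G D" and "(x,y) \<in># S" and "(y,z) \<in># S"
  shows "G3I S G D"
proof (cases "x = y")
  case True
  then obtain S' where S': "S = add_mset (x,z) S'"
    using assms(3) by (metis multi_member_split)
  \<comment> \<open>a reflexive atom x \<prec> x makes the transitivity rule applicable to x \<prec> x, x \<prec> z\<close>
  have "G3I ({#(x,x), (x,z)#} + S') G D"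
    using G3I_weaken_rel[OF assms(1), of "(x,x)"] S'
    by (intro G3I.Trans[of x x z]) (simp add: add_mset_commute)
  then show ?thesis
    using S' G3I.Refl[of x S G D] by (simp add: add_mset_commute)
next
  case False
  obtain S' where S': "S = add_mset (x,y) S'"
    using assms(2) by (metis multi_member_split)
  with assms(3) False have "(y,z) \<in># S'"
    by auto
  then obtain S'' where "S' = add_mset (y,z) S''"
    by (metis multi_member_split)
  with S' assms(1) show ?thesis
    using G3I.Trans[of x y z S'' G D] by (simp add: add_mset_commute)
qed

section \<open>Invertibility of the logical rules\<close>

lemma G3I_LConj_inv:
  "G3I S G D \<Longrightarrow> G = add_mset (x, Conj A B) G0 \<Longrightarrow> G3I S (add_mset (x,A) (add_mset (x,B) G0)) D"
proof (induction arbitrary: G0 rule: G3I.induct)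
  case (Ax a b S1 P G1 D1)
  have "(a, Atm P) \<in># G0"
    using add_mset_eq_add_mset_mem[OF Ax.prems(1)] by simp
  then show ?case by (intro G3I_Ax_mem[of a b _ P]) auto
next
  case (LBot S1 a G1 D1)
  have "(a, Bot) \<in># G0"
    using add_mset_eq_add_mset_mem[OF LBot.prems(1)] by simp
  then show ?case by (intro G3I_LBot_mem[of a]) auto
next
  case (LConj S1 G1 a C E D1)
  show ?case
  proof (cases "(a, Conj C E) = (x, Conj A B) \<and> G1 = G0")
    case True
    then show ?thesis using LConj.hyps by (simp add: add_mset_commute)
  next
    case False
    then obtain K where K: "G1 = add_mset (x, Conj A B) K" "G0 = add_mset (a, Conj C E) K"
      using LConj.prems by (auto simp: add_eq_conv_ex)
    have "G3I S1 (add_mset (x,A) (add_mset (x,B) (K + {#(a,C),(a,E)#}))) D1"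
      by (rule LConj.IH) (simp add: K)
    then have "G3I S1 (add_mset (a, Conj C E) (add_mset (x,A) (add_mset (x,B) K))) D1"
      by (intro G3I.LConj) (simp add: add_mset_commute)
    then show ?thesis using K by (simp add: add_mset_commute)
  qed
next
  case (RConj S1 G1 a C D1 E)
  then show ?case by (intro G3I.RConj) simp_all
next
  case (LDisj S1 a C G1 D1 E)
  obtain K where K: "G1 = add_mset (x, Conj A B) K" "G0 = add_mset (a, Disj C E) K"
    using LDisj.prems by (auto simp: add_eq_conv_ex)
  have "G3I S1 (add_mset (x,A) (add_mset (x,B) (add_mset (a,C) K))) D1"
    "G3I S1 (add_mset (x,A) (add_mset (x,B) (add_mset (a,E) K))) D1"
    by (rule LDisj.IH; simp add: K add_mset_commute)+
  then have "G3I S1 (add_mset (a, Disj C E) (add_mset (x,A) (add_mset (x,B) K))) D1"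
    by (intro G3I.LDisj) (simp_all add: add_mset_commute)
  then show ?case using K by (simp add: add_mset_commute)
next
  case (RDisj S1 G1 a C E D1)
  then show ?case by (intro G3I.RDisj) simp
next
  case (LImp a b S1 C E G1 D1)
  have mem: "(a, Imp C E) \<in># G0"
    using add_mset_eq_add_mset_mem[OF LImp.prems(1)] by simp
  have "add_mset (a, Imp C E) (add_mset (b,E) G1) = add_mset (x, Conj A B) (add_mset (b,E) G0)"
    using LImp.prems(1) by (simp add: add_mset_commute)
  then have "G3I (add_mset (a,b) S1) (add_mset (b,E) (add_mset (x,A) (add_mset (x,B) G0))) D1"
    using LImp.IH(2) by (simp add: add_mset_commute)
  with LImp.IH(1)[OF LImp.prems] mem show ?case
    by (auto intro: G3I_LImp_mem)
next
  case (RImp b S1 G1 D1 a C E)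
  have "G3I (add_mset (a,b) S1) (add_mset (b,C) (add_mset (x,A) (add_mset (x,B) G0))) (add_mset (b,E) D1)"
    using RImp.IH[of "add_mset (b,C) G0"] RImp.prems by (simp add: add_mset_commute)
  with RImp.hyps RImp.prems show ?case
    by (intro G3I.RImp) auto
next
  case (Refl a S1 G1 D1)
  show ?case by (rule G3I.Refl[of a]) (fact Refl.IH[OF Refl.prems])
next
  case (Trans a b c S1 G1 D1)
  show ?case by (rule G3I.Trans) (fact Trans.IH[OF Trans.prems])
qed

lemma G3I_LDisj_inv:
  "G3I S G D \<Longrightarrow> G = add_mset (x, Disj A B) G0 \<Longrightarrow> F \<in> {A, B}
   \<Longrightarrow> G3I S (add_mset (x,F) G0) D"
proof (induction arbitrary: G0 rule: G3I.induct)
  case (Ax a b S1 P G1 D1)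
  have "(a, Atm P) \<in># G0"
    using add_mset_eq_add_mset_mem[OF Ax.prems(1)] by simp
  then show ?case by (intro G3I_Ax_mem[of a b _ P]) auto
next
  case (LBot S1 a G1 D1)
  have "(a, Bot) \<in># G0"
    using add_mset_eq_add_mset_mem[OF LBot.prems(1)] by simp
  then show ?case by (intro G3I_LBot_mem[of a]) auto
next
  case (LConj S1 G1 a C E D1)
  obtain K where K: "G1 = add_mset (x, Disj A B) K" "G0 = add_mset (a, Conj C E) K"
    using LConj.prems by (auto simp: add_eq_conv_ex)
  have "G3I S1 (add_mset (x,F) (K + {#(a,C),(a,E)#})) D1"
    using LConj.IH LConj.prems by (simp add: K add_mset_commute)
  then have "G3I S1 (add_mset (a, Conj C E) (add_mset (x,F) K)) D1"
    by (intro G3I.LConj) (simp add: add_mset_commute)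
  then show ?case using K by (simp add: add_mset_commute)
next
  case (RConj S1 G1 a C D1 E)
  then show ?case by (intro G3I.RConj) simp_all
next
  case (LDisj S1 a C G1 D1 E)
  show ?case
  proof (cases "(a, Disj C E) = (x, Disj A B) \<and> G1 = G0")
    case True
    then show ?thesis using LDisj.hyps LDisj.prems(2) by auto
  next
    case False
    then obtain K where K: "G1 = add_mset (x, Disj A B) K" "G0 = add_mset (a, Disj C E) K"
      using LDisj.prems by (auto simp: add_eq_conv_ex)
    have "G3I S1 (add_mset (x,F) (add_mset (a,C) K)) D1" "G3I S1 (add_mset (x,F) (add_mset (a,E) K)) D1"
      using LDisj.IH LDisj.prems(2) by (simp_all add: K add_mset_commute)
    then have "G3I S1 (add_mset (a, Disj C E) (add_mset (x,F) K)) D1"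
      by (intro G3I.LDisj) (simp_all add: add_mset_commute)
    then show ?thesis using K by (simp add: add_mset_commute)
  qed
next
  case (RDisj S1 G1 a C E D1)
  then show ?case by (intro G3I.RDisj) simp
next
  case (LImp a b S1 C E G1 D1)
  have mem: "(a, Imp C E) \<in># G0"
    using add_mset_eq_add_mset_mem[OF LImp.prems(1)] by simp
  have "add_mset (a, Imp C E) (add_mset (b,E) G1) = add_mset (x, Disj A B) (add_mset (b,E) G0)"
    using LImp.prems(1) by (simp add: add_mset_commute)
  then have "G3I (add_mset (a,b) S1) (add_mset (b,E) (add_mset (x,F) G0)) D1"
    using LImp.IH(2) LImp.prems(2) by (simp add: add_mset_commute)
  with LImp.IH(1)[OF LImp.prems] mem show ?case
    by (auto intro: G3I_LImp_mem)
next
  case (RImp b S1 G1 D1 a C E)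
  have "G3I (add_mset (a,b) S1) (add_mset (b,C) (add_mset (x,F) G0)) (add_mset (b,E) D1)"
    using RImp.IH[of "add_mset (b,C) G0"] RImp.prems by (simp add: add_mset_commute)
  with RImp.hyps RImp.prems show ?case
    by (intro G3I.RImp) auto
next
  case (Refl a S1 G1 D1)
  show ?case by (rule G3I.Refl[of a]) (fact Refl.IH[OF Refl.prems])
next
  case (Trans a b c S1 G1 D1)
  show ?case by (rule G3I.Trans) (fact Trans.IH[OF Trans.prems])
qed

lemma G3I_RConj_inv:
  "G3I S G D \<Longrightarrow> D = add_mset (x, Conj A B) D0 \<Longrightarrow> F \<in> {A, B}
   \<Longrightarrow> G3I S G (add_mset (x,F) D0)"
proof (induction arbitrary: D0 rule: G3I.induct)
  case (Ax a b S1 P G1 D1)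
  have "(b, Atm P) \<in># D0"
    using add_mset_eq_add_mset_mem[OF Ax.prems(1)] by simp
  then show ?case by (intro G3I_Ax_mem[of a b _ P]) auto
next
  case (LBot S1 a G1 D1)
  show ?case by (intro G3I_LBot_mem[of a]) simp
next
  case (LConj S1 G1 a C E D1)
  then show ?case by (intro G3I.LConj) simp
next
  case (RConj S1 G1 a C D1 E)
  show ?case
  proof (cases "(a, Conj C E) = (x, Conj A B) \<and> D1 = D0")
    case True
    then show ?thesis using RConj.hyps RConj.prems(2) by auto
  next
    case False
    then obtain K where K: "D1 = add_mset (x, Conj A B) K" "D0 = add_mset (a, Conj C E) K"
      using RConj.prems by (auto simp: add_eq_conv_ex)
    have "G3I S1 G1 (add_mset (x,F) (add_mset (a,C) K))" "G3I S1 G1 (add_mset (x,F) (add_mset (a,E) K))"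
      using RConj.IH RConj.prems(2) by (simp_all add: K add_mset_commute)
    then have "G3I S1 G1 (add_mset (a, Conj C E) (add_mset (x,F) K))"
      by (intro G3I.RConj) (simp_all add: add_mset_commute)
    then show ?thesis using K by (simp add: add_mset_commute)
  qed
next
  case (LDisj S1 a C G1 D1 E)
  then show ?case by (intro G3I.LDisj) simp_all
next
  case (RDisj S1 G1 a C E D1)
  obtain K where K: "D1 = add_mset (x, Conj A B) K" "D0 = add_mset (a, Disj C E) K"
    using RDisj.prems by (auto simp: add_eq_conv_ex)
  have "G3I S1 G1 (add_mset (x,F) ({#(a,C),(a,E)#} + K))"
    using RDisj.IH RDisj.prems(2) by (simp add: K add_mset_commute)
  then have "G3I S1 G1 (add_mset (a, Disj C E) (add_mset (x,F) K))"
    by (intro G3I.RDisj) (simp add: add_mset_commute)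
  then show ?case using K by (simp add: add_mset_commute)
next
  case (LImp a b S1 C E G1 D1)
  have "G3I (add_mset (a,b) S1) (add_mset (a, Imp C E) G1) (add_mset (b,C) (add_mset (x,F) D0))"
    using LImp.IH(1) LImp.prems by (simp add: add_mset_commute)
  then show ?case
    using LImp.IH(2)[OF LImp.prems] by (rule G3I.LImp)
next
  case (RImp b S1 G1 D1 a C E)
  obtain K where K: "D1 = add_mset (x, Conj A B) K" "D0 = add_mset (a, Imp C E) K"
    using RImp.prems by (auto simp: add_eq_conv_ex)
  have "G3I (add_mset (a,b) S1) (add_mset (b,C) G1) (add_mset (b,E) (add_mset (x,F) K))"
    using RImp.IH RImp.prems(2) by (simp add: K add_mset_commute)
  with RImp.hyps K have "G3I S1 G1 (add_mset (a, Imp C E) (add_mset (x,F) K))"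
    by (intro G3I.RImp) auto
  then show ?case using K by (simp add: add_mset_commute)
next
  case (Refl a S1 G1 D1)
  show ?case by (rule G3I.Refl[of a]) (fact Refl.IH[OF Refl.prems])
next
  case (Trans a b c S1 G1 D1)
  show ?case by (rule G3I.Trans) (fact Trans.IH[OF Trans.prems])
qed

lemma G3I_RDisj_inv:
  "G3I S G D \<Longrightarrow> D = add_mset (x, Disj A B) D0 \<Longrightarrow> G3I S G (add_mset (x,A) (add_mset (x,B) D0))"
proof (induction arbitrary: D0 rule: G3I.induct)
  case (Ax a b S1 P G1 D1)
  have "(b, Atm P) \<in># D0"
    using add_mset_eq_add_mset_mem[OF Ax.prems(1)] by simp
  then show ?case by (intro G3I_Ax_mem[of a b _ P]) auto
next
  case (LBot S1 a G1 D1)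
  show ?case by (intro G3I_LBot_mem[of a]) simp
next
  case (LConj S1 G1 a C E D1)
  then show ?case by (intro G3I.LConj) simp
next
  case (RConj S1 G1 a C D1 E)
  obtain K where K: "D1 = add_mset (x, Disj A B) K" "D0 = add_mset (a, Conj C E) K"
    using RConj.prems by (auto simp: add_eq_conv_ex)
  have "G3I S1 G1 (add_mset (x,A) (add_mset (x,B) (add_mset (a,C) K)))"
    "G3I S1 G1 (add_mset (x,A) (add_mset (x,B) (add_mset (a,E) K)))"
    using RConj.IH by (simp_all add: K add_mset_commute)
  then have "G3I S1 G1 (add_mset (a, Conj C E) (add_mset (x,A) (add_mset (x,B) K)))"
    by (intro G3I.RConj) (simp_all add: add_mset_commute)
  then show ?case using K by (simp add: add_mset_commute)
next
  case (LDisj S1 a C G1 D1 E)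
  then show ?case by (intro G3I.LDisj) simp_all
next
  case (RDisj S1 G1 a C E D1)
  show ?case
  proof (cases "(a, Disj C E) = (x, Disj A B) \<and> D1 = D0")
    case True
    then show ?thesis using RDisj.hyps by (simp add: add_mset_commute)
  next
    case False
    then obtain K where K: "D1 = add_mset (x, Disj A B) K" "D0 = add_mset (a, Disj C E) K"
      using RDisj.prems by (auto simp: add_eq_conv_ex)
    have "G3I S1 G1 (add_mset (x,A) (add_mset (x,B) ({#(a,C),(a,E)#} + K)))"
      using RDisj.IH by (simp add: K add_mset_commute)
    then have "G3I S1 G1 (add_mset (a, Disj C E) (add_mset (x,A) (add_mset (x,B) K)))"
      by (intro G3I.RDisj) (simp add: add_mset_commute)
    then show ?thesis using K by (simp add: add_mset_commute)
  qed
next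
  case (LImp a b S1 C E G1 D1)
  have "G3I (add_mset (a,b) S1) (add_mset (a, Imp C E) G1) (add_mset (b,C) (add_mset (x,A) (add_mset (x,B) D0)))"
    using LImp.IH(1) LImp.prems by (simp add: add_mset_commute)
  then show ?case
    using LImp.IH(2)[OF LImp.prems] by (rule G3I.LImp)
next
  case (RImp b S1 G1 D1 a C E)
  obtain K where K: "D1 = add_mset (x, Disj A B) K" "D0 = add_mset (a, Imp C E) K"
    using RImp.prems by (auto simp: add_eq_conv_ex)
  have "G3I (add_mset (a,b) S1) (add_mset (b,C) G1) (add_mset (b,E) (add_mset (x,A) (add_mset (x,B) K)))"
    using RImp.IH by (simp add: K add_mset_commute)
  with RImp.hyps K have "G3I S1 G1 (add_mset (a, Imp C E) (add_mset (x,A) (add_mset (x,B) K)))"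
    by (intro G3I.RImp) auto
  then show ?case using K by (simp add: add_mset_commute)
next
  case (Refl a S1 G1 D1)
  show ?case by (rule G3I.Refl[of a]) (fact Refl.IH[OF Refl.prems])
next
  case (Trans a b c S1 G1 D1)
  show ?case by (rule G3I.Trans) (fact Trans.IH[OF Trans.prems])
qed

lemma G3I_RImp_inv:
  "G3I S G D \<Longrightarrow> D = add_mset (x, Imp A B) D0 \<Longrightarrow>
   w \<notin> labels_rel S \<Longrightarrow> w \<notin> labels_fm G \<Longrightarrow> w \<notin> labels_fm D \<Longrightarrow>
   G3I (add_mset (x,w) S) (add_mset (w,A) G) (add_mset (w,B) D0)"
proof (induction arbitrary: D0 w rule: G3I.induct)
  case (Ax a b S1 P G1 D1)
  have "(b, Atm P) \<in># D0"
    using add_mset_eq_add_mset_mem[OF Ax.prems(1)] by simp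
  then show ?case by (intro G3I_Ax_mem[of a b _ P]) auto
next
  case (LBot S1 a G1 D1)
  show ?case by (intro G3I_LBot_mem[of a]) simp
next
  case (LConj S1 G1 a C E D1)
  have "G3I (add_mset (x,w) S1) (add_mset (w,A) (G1 + {#(a,C),(a,E)#})) (add_mset (w,B) D0)"
    by (rule LConj.IH) (use LConj.prems in auto)
  then show ?case
    using G3I.LConj[of "add_mset (x,w) S1" "add_mset (w,A) G1"] by (simp add: add_mset_commute)
next
  case (RConj S1 G1 a C D1 E)
  obtain K where K: "D1 = add_mset (x, Imp A B) K" "D0 = add_mset (a, Conj C E) K"
    using RConj.prems by (auto simp: add_eq_conv_ex)
  have "G3I (add_mset (x,w) S1) (add_mset (w,A) G1) (add_mset (w,B) (add_mset (a,C) K))"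
    "G3I (add_mset (x,w) S1) (add_mset (w,A) G1) (add_mset (w,B) (add_mset (a,E) K))"
    by (rule RConj.IH; use RConj.prems K in \<open>auto simp: add_mset_commute\<close>)+
  then have "G3I (add_mset (x,w) S1) (add_mset (w,A) G1) (add_mset (a, Conj C E) (add_mset (w,B) K))"
    by (intro G3I.RConj) (simp_all add: add_mset_commute)
  then show ?case using K by (simp add: add_mset_commute)
next
  case (LDisj S1 a C G1 D1 E)
  have "G3I (add_mset (x,w) S1) (add_mset (w,A) (add_mset (a,C) G1)) (add_mset (w,B) D0)"
    "G3I (add_mset (x,w) S1) (add_mset (w,A) (add_mset (a,E) G1)) (add_mset (w,B) D0)"
    by (rule LDisj.IH; use LDisj.prems in auto)+
  then have "G3I (add_mset (x,w) S1) (add_mset (a, Disj C E) (add_mset (w,A) G1)) (add_mset (w,B) D0)"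
    by (intro G3I.LDisj) (simp_all add: add_mset_commute)
  then show ?case by (simp add: add_mset_commute)
next
  case (RDisj S1 G1 a C E D1)
  obtain K where K: "D1 = add_mset (x, Imp A B) K" "D0 = add_mset (a, Disj C E) K"
    using RDisj.prems by (auto simp: add_eq_conv_ex)
  have "G3I (add_mset (x,w) S1) (add_mset (w,A) G1) (add_mset (w,B) ({#(a,C),(a,E)#} + K))"
    by (rule RDisj.IH) (use RDisj.prems K in \<open>auto simp: add_mset_commute\<close>)
  then have "G3I (add_mset (x,w) S1) (add_mset (w,A) G1) (add_mset (a, Disj C E) (add_mset (w,B) K))"
    by (intro G3I.RDisj) (simp add: add_mset_commute)
  then show ?case using K by (simp add: add_mset_commute)
next
  case (LImp a b S1 C E G1 D1)
  have left: "G3I (add_mset (x,w) (add_mset (a,b) S1)) (add_mset (w,A) (add_mset (a, Imp C E) G1))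
      (add_mset (w,B) (add_mset (b,C) D0))"
    by (rule LImp.IH(1)) (use LImp.prems in auto)
  have right: "G3I (add_mset (x,w) (add_mset (a,b) S1)) (add_mset (w,A) (add_mset (a, Imp C E) (add_mset (b,E) G1)))
      (add_mset (w,B) D0)"
    by (rule LImp.IH(2)) (use LImp.prems in auto)
  show ?case
    by (rule G3I_LImp_mem[where x=a and y=b and A=C and B=E])
      (use left right in \<open>simp_all add: add_mset_commute\<close>)
next
  case (RImp b S1 G1 D1 a C E)
  show ?case
  proof (cases "(a, Imp C E) = (x, Imp A B) \<and> D1 = D0")
    case True
    \<comment> \<open>the inverted formula is principal: rename the eigenvariable b to w\<close>
    define f where "f = id(b := w)"
    have "G3I (S1 + image_mset (map_prod f f) {#(x,b)#}) (G1 + image_mset (apfst f) {#(b,A)#})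
        (D0 + image_mset (apfst f) {#(b,B)#})"
      by (rule G3I_rename) (use RImp.hyps True in \<open>auto simp: f_def\<close>)
    then show ?thesis
      using RImp.hyps True by (simp add: f_def)
  next
    case False
    then obtain K where K: "D1 = add_mset (x, Imp A B) K" "D0 = add_mset (a, Imp C E) K"
      using RImp.prems by (auto simp: add_eq_conv_ex)
    \<comment> \<open>w may coincide with the eigenvariable b, so both are first replaced by fresh labels\<close>
    obtain w' where w': "w' \<notin> labels_rel (add_mset (a,b) S1) \<union> labels_fm (add_mset (b,C) G1)
        \<union> labels_fm (add_mset (b,E) D1) \<union> {w}"
      using obtain_fresh_label by (metis finite_Un finite_labels finite.emptyI finite.insertI)
    have ih_fresh: "G3I (add_mset (x,w') (add_mset (a,b) S1)) (add_mset (w',A) (add_mset (b,C) G1))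
        (add_mset (w',B) (add_mset (b,E) K))"
      by (rule RImp.IH) (use w' K in \<open>auto simp: add_mset_commute\<close>)
    obtain z where z: "z \<notin> labels_rel S1 \<union> labels_fm G1 \<union> labels_fm D1 \<union> {w, a, x, b, w'}"
      using obtain_fresh_label by (metis finite_Un finite_labels finite.emptyI finite.insertI)
    define f where "f = id(w' := w, b := z)"
    have "G3I (S1 + image_mset (map_prod f f) {#(x,w'), (a,b)#})
        (G1 + image_mset (apfst f) {#(w',A), (b,C)#}) (K + image_mset (apfst f) {#(w',B), (b,E)#})"
      by (rule G3I_rename) (use ih_fresh RImp.hyps w' K in \<open>auto simp: f_def add_mset_commute\<close>)
    moreover have "f x = x" "f a = a" "f w' = w" "f b = z"
      using RImp.hyps w' K by (auto simp: f_def)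
    ultimately have "G3I (add_mset (a,z) (add_mset (x,w) S1)) (add_mset (z,C) (add_mset (w,A) G1))
        (add_mset (z,E) (add_mset (w,B) K))"
      by (simp add: add_mset_commute)
    with z RImp.prems K have "G3I (add_mset (x,w) S1) (add_mset (w,A) G1) (add_mset (a, Imp C E) (add_mset (w,B) K))"
      by (intro G3I.RImp) auto
    then show ?thesis using K by (simp add: add_mset_commute)
  qed
next
  case (Refl a S1 G1 D1)
  \<comment> \<open>w may be the label a of the reflexive atom, which the premiss mentions\<close>
  obtain w' where w': "w' \<notin> labels_rel (add_mset (a,a) S1) \<union> labels_fm G1 \<union> labels_fm D1"
    using obtain_fresh_label by (metis finite_Un finite_labels)
  have ih_fresh: "G3I (add_mset (a,a) S1 + {#(x,w')#}) (G1 + {#(w',A)#}) (D0 + {#(w',B)#})"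
    using Refl.IH Refl.prems w' by (auto simp: add_mset_commute)
  define f where "f = id(w' := w)"
  have "G3I (add_mset (a,a) S1 + image_mset (map_prod f f) {#(x,w')#}) (G1 + image_mset (apfst f) {#(w',A)#})
      (D0 + image_mset (apfst f) {#(w',B)#})"
    by (rule G3I_rename[OF ih_fresh]) (use w' Refl.prems in \<open>auto simp: f_def\<close>)
  moreover have "f x = x" "f w' = w"
    using w' Refl.prems by (auto simp: f_def)
  ultimately show ?case
    using G3I.Refl[of a] by (simp add: add_mset_commute)
next
  case (Trans a b c S1 G1 D1)
  have "G3I (add_mset (x,w) ({#(a,b),(b,c),(a,c)#} + S1)) (add_mset (w,A) G1) (add_mset (w,B) D0)"
    using Trans.IH Trans.prems by auto
  then have "G3I ({#(a,b),(b,c)#} + add_mset (x,w) S1) (add_mset (w,A) G1) (add_mset (w,B) D0)"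
    by (intro G3I.Trans) (simp add: add_mset_commute)
  then show ?case by (simp add: add_mset_commute)
qed

section \<open>Monotonicity\<close>

lemma G3I_L_prec_Atm_Imp:
  "G3I S G D \<Longrightarrow> (x,y) \<in># S \<Longrightarrow> G = G0 + {#(x,A), (y,A)#}
   \<Longrightarrow> \<forall>B C. A \<noteq> Conj B C \<and> A \<noteq> Disj B C
   \<Longrightarrow> G3I S (add_mset (x,A) G0) D"
proof (induction arbitrary: G0 rule: G3I.induct)
  case (Ax a b S1 P G1 D1)
  have "(a, Atm P) \<in># add_mset (a, Atm P) G1"
    by simp
  then have "(a, Atm P) \<in># G0 + {#(x,A), (y,A)#}"
    by (simp only: Ax.prems(2))
  then consider "(a, Atm P) \<in># add_mset (x,A) G0" | "a = y" "A = Atm P"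
    by auto
  then show ?case
  proof cases
    case 1
    then show ?thesis by (intro G3I_Ax_mem[of a b _ P]) auto
  next
    case 2
    \<comment> \<open>y : P was the axiom's left formula; x \<prec> y \<prec> b lets x : P take its place\<close>
    have "G3I (add_mset (x,b) (add_mset (a,b) S1)) (add_mset (x,A) G0) (add_mset (b, Atm P) D1)"
      using 2 by (intro G3I_Ax_mem[of x b _ P]) auto
    from G3I_trans_mem[OF this Ax.prems(1)] 2 show ?thesis
      by simp
  qed
next
  case (LBot S1 a G1 D1)
  have "(a, Bot) \<in># add_mset (a, Bot) G1"
    by simp
  then have "(a, Bot) \<in># G0 + {#(x,A), (y,A)#}"
    by (simp only: LBot.prems(2))
  then have "\<exists>c. (c, Bot) \<in># add_mset (x,A) G0"
    by auto
  then show ?case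
    using G3I_LBot_mem by blast
next
  case (LConj S1 G1 a C E D1)
  obtain K where K: "G0 = add_mset (a, Conj C E) K" "G1 = K + {#(x,A), (y,A)#}"
    by (rule add_mset_eq_union_pair[OF LConj.prems(2)]) (use LConj.prems(3) in auto)
  have "G3I S1 (add_mset (x,A) (K + {#(a,C), (a,E)#})) D1"
    by (rule LConj.IH) (use LConj.prems K in auto)
  then have "G3I S1 (add_mset (a, Conj C E) (add_mset (x,A) K)) D1"
    by (intro G3I.LConj) (simp add: add_mset_commute)
  then show ?case
    using K by (simp add: add_mset_commute)
next
  case (RConj S1 G1 a C D1 E)
  show ?case
    by (rule G3I.RConj) (fact RConj.IH(1)[OF RConj.prems], fact RConj.IH(2)[OF RConj.prems])
next
  case (LDisj S1 a C G1 D1 E)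
  obtain K where K: "G0 = add_mset (a, Disj C E) K" "G1 = K + {#(x,A), (y,A)#}"
    by (rule add_mset_eq_union_pair[OF LDisj.prems(2)]) (use LDisj.prems(3) in auto)
  have "G3I S1 (add_mset (x,A) (add_mset (a,C) K)) D1" "G3I S1 (add_mset (x,A) (add_mset (a,E) K)) D1"
    by (rule LDisj.IH; use LDisj.prems K in auto)+
  then have "G3I S1 (add_mset (a, Disj C E) (add_mset (x,A) K)) D1"
    by (intro G3I.LDisj) (simp_all add: add_mset_commute)
  then show ?case
    using K by (simp add: add_mset_commute)
next
  case (RDisj S1 G1 a C E D1)
  show ?case
    by (rule G3I.RDisj) (fact RDisj.IH[OF RDisj.prems])
next
  case (LImp a b S1 C E G1 D1)
  have left: "G3I (add_mset (a,b) S1) (add_mset (x,A) G0) (add_mset (b,C) D1)"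
    by (fact LImp.IH(1)[OF LImp.prems])
  have "add_mset (a, Imp C E) (add_mset (b,E) G1) = add_mset (b,E) G0 + {#(x,A), (y,A)#}"
    using LImp.prems(2) by (simp add: add_mset_commute)
  then have right: "G3I (add_mset (a,b) S1) (add_mset (b,E) (add_mset (x,A) G0)) D1"
    using LImp.IH(2)[OF LImp.prems(1) _ LImp.prems(3)] by (simp add: add_mset_commute)
  have "(a, Imp C E) \<in># add_mset (a, Imp C E) G1"
    by simp
  then have "(a, Imp C E) \<in># G0 + {#(x,A), (y,A)#}"
    by (simp only: LImp.prems(2))
  then consider "(a, Imp C E) \<in># add_mset (x,A) G0" | "a = y" "A = Imp C E"
    by auto
  then show ?case
  proof cases
    case 1
    show ?thesis
      using G3I_LImp_mem[OF left right _ 1] by simp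
  next
    case 2
    \<comment> \<open>y : C \<supset> E was principal; with x \<prec> y \<prec> b the rule applies to x : C \<supset> E instead\<close>
    have "G3I (add_mset (x,b) (add_mset (a,b) S1)) (add_mset (x,A) G0) D1"
      using G3I_LImp_mem[OF G3I_weaken_rel[OF left, of "(x,b)"] G3I_weaken_rel[OF right, of "(x,b)"], where x=x] 2
      by simp
    from G3I_trans_mem[OF this LImp.prems(1)] 2 show ?thesis
      by simp
  qed
next
  case (RImp b S1 G1 D1 a C E)
  have "x \<in> labels_rel S1"
    using RImp.prems(1) mem_labels_rel by blast
  moreover have "G3I (add_mset (a,b) S1) (add_mset (x,A) (add_mset (b,C) G0)) (add_mset (b,E) D1)"
    by (rule RImp.IH) (use RImp.prems in auto)
  ultimately show ?case
    using RImp.hyps RImp.prems by (intro G3I.RImp[where y=b]) (auto simp: add_mset_commute)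
next
  case (Refl a S1 G1 D1)
  show ?case
    by (rule G3I.Refl[of a]) (rule Refl.IH, use Refl.prems in auto)
next
  case (Trans a b c S1 G1 D1)
  show ?case
    by (rule G3I.Trans) (rule Trans.IH, use Trans.prems in auto)
qed

lemma G3I_R_prec_Atm_Bot:
  "G3I S G D \<Longrightarrow> (x,y) \<in># S \<Longrightarrow> D = D0 + {#(x,A), (y,A)#}
   \<Longrightarrow> \<forall>B C. A \<noteq> Conj B C \<and> A \<noteq> Disj B C \<and> A \<noteq> Imp B C
   \<Longrightarrow> G3I S G (add_mset (y,A) D0)"
proof (induction arbitrary: D0 rule: G3I.induct)
  case (Ax a b S1 P G1 D1)
  have "(b, Atm P) \<in># add_mset (b, Atm P) D1"
    by simp
  then have "(b, Atm P) \<in># D0 + {#(x,A), (y,A)#}"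
    by (simp only: Ax.prems(2))
  then consider "(b, Atm P) \<in># add_mset (y,A) D0" | "b = x" "A = Atm P"
    by auto
  then show ?case
  proof cases
    case 1
    then show ?thesis by (intro G3I_Ax_mem[of a b _ P]) auto
  next
    case 2
    \<comment> \<open>x : P was the axiom's right formula; a \<prec> x \<prec> y lets y : P take its place\<close>
    have "G3I (add_mset (a,y) (add_mset (a,b) S1)) (add_mset (a, Atm P) G1) (add_mset (y,A) D0)"
      using 2 by (intro G3I_Ax_mem[of a y _ P]) auto
    from G3I_trans_mem[OF this _ Ax.prems(1)] 2 show ?thesis
      by simp
  qed
next
  case (LBot S1 a G1 D1)
  show ?case by (intro G3I_LBot_mem[of a]) simp
next
  case (LConj S1 G1 a C E D1)
  show ?case by (rule G3I.LConj) (fact LConj.IH[OF LConj.prems])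
next
  case (RConj S1 G1 a C D1 E)
  obtain K where K: "D0 = add_mset (a, Conj C E) K" "D1 = K + {#(x,A), (y,A)#}"
    by (rule add_mset_eq_union_pair[OF RConj.prems(2)]) (use RConj.prems(3) in auto)
  have "G3I S1 G1 (add_mset (y,A) (add_mset (a,C) K))" "G3I S1 G1 (add_mset (y,A) (add_mset (a,E) K))"
    by (rule RConj.IH; use RConj.prems K in auto)+
  then have "G3I S1 G1 (add_mset (a, Conj C E) (add_mset (y,A) K))"
    by (intro G3I.RConj) (simp_all add: add_mset_commute)
  then show ?case
    using K by (simp add: add_mset_commute)
next
  case (LDisj S1 a C G1 D1 E)
  show ?case
    by (rule G3I.LDisj) (fact LDisj.IH(1)[OF LDisj.prems], fact LDisj.IH(2)[OF LDisj.prems])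
next
  case (RDisj S1 G1 a C E D1)
  obtain K where K: "D0 = add_mset (a, Disj C E) K" "D1 = K + {#(x,A), (y,A)#}"
    by (rule add_mset_eq_union_pair[OF RDisj.prems(2)]) (use RDisj.prems(3) in auto)
  have "G3I S1 G1 (add_mset (y,A) ({#(a,C), (a,E)#} + K))"
    by (rule RDisj.IH) (use RDisj.prems K in auto)
  then have "G3I S1 G1 (add_mset (a, Disj C E) (add_mset (y,A) K))"
    by (intro G3I.RDisj) (simp add: add_mset_commute)
  then show ?case
    using K by (simp add: add_mset_commute)
next
  case (LImp a b S1 C E G1 D1)
  have "G3I (add_mset (a,b) S1) (add_mset (a, Imp C E) G1) (add_mset (b,C) (add_mset (y,A) D0))"
    using LImp.IH(1)[of "add_mset (b,C) D0"] LImp.prems by (simp add: add_mset_commute)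
  then show ?case
    using LImp.IH(2)[OF LImp.prems] by (rule G3I.LImp)
next
  case (RImp b S1 G1 D1 a C E)
  obtain K where K: "D0 = add_mset (a, Imp C E) K" "D1 = K + {#(x,A), (y,A)#}"
    by (rule add_mset_eq_union_pair[OF RImp.prems(2)]) (use RImp.prems(3) in auto)
  have "y \<in> labels_rel S1"
    using RImp.prems(1) mem_labels_rel by blast
  moreover have "G3I (add_mset (a,b) S1) (add_mset (b,C) G1) (add_mset (y,A) (add_mset (b,E) K))"
    by (rule RImp.IH) (use RImp.prems K in auto)
  ultimately have "G3I S1 G1 (add_mset (a, Imp C E) (add_mset (y,A) K))"
    using RImp.hyps K by (intro G3I.RImp[where y=b]) (auto simp: add_mset_commute)
  then show ?case
    using K by (simp add: add_mset_commute)
next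
  case (Refl a S1 G1 D1)
  show ?case
    by (rule G3I.Refl[of a]) (rule Refl.IH, use Refl.prems in auto)
next
  case (Trans a b c S1 G1 D1)
  show ?case
    by (rule G3I.Trans) (rule Trans.IH, use Trans.prems in auto)
qed

lemma G3I_L_prec:
  "(x,y) \<in># S \<Longrightarrow> G3I S (G + {#(x,A), (y,A)#}) D \<Longrightarrow> G3I S (add_mset (x,A) G) D"
proof (induction A arbitrary: x y S G D)
  case (Atm P)
  then show ?case by (intro G3I_L_prec_Atm_Imp[OF Atm.prems(2) Atm.prems(1) refl]) simp
next
  case Bot
  then show ?case by (intro G3I_LBot_mem[of x]) simp
next
  case (Conj B C)
  have "G3I S (add_mset (y,B) (add_mset (y,C) (G + {#(x, Conj B C)#}))) D"
    by (rule G3I_LConj_inv[OF Conj.prems(2)]) (simp add: add_mset_commute)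
  then have "G3I S (add_mset (x,B) (add_mset (x,C) (add_mset (y,B) (add_mset (y,C) G)))) D"
    by (rule G3I_LConj_inv) (simp add: add_mset_commute)
  then have "G3I S (add_mset (x,B) (add_mset (x,C) (add_mset (y,C) G))) D"
    using Conj.IH(1)[OF Conj.prems(1), where G = "add_mset (x,C) (add_mset (y,C) G)"] by (simp add: add_mset_commute)
  then have "G3I S (add_mset (x,C) (add_mset (x,B) G)) D"
    using Conj.IH(2)[OF Conj.prems(1), where G = "add_mset (x,B) G"] by (simp add: add_mset_commute)
  then show ?case
    by (intro G3I.LConj) (simp add: add_mset_commute)
next
  case (Disj B C)
  have "G3I S (add_mset (x,F) (add_mset (y,F) G)) D" if "F \<in> {B, C}" for F
  proof -
    have "G3I S (add_mset (y,F) (G + {#(x, Disj B C)#})) D"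
      by (rule G3I_LDisj_inv[OF Disj.prems(2) _ that]) (simp add: add_mset_commute)
    then show ?thesis
      by (rule G3I_LDisj_inv[OF _ _ that]) (simp add: add_mset_commute)
  qed
  then have "G3I S (add_mset (x,B) G) D" "G3I S (add_mset (x,C) G) D"
    using Disj.IH[OF Disj.prems(1)] by (simp_all add: add_mset_commute)
  then show ?case
    by (rule G3I.LDisj)
next
  case (Imp B C)
  then show ?case by (intro G3I_L_prec_Atm_Imp[OF Imp.prems(2) Imp.prems(1) refl]) simp
qed

lemma G3I_R_prec:
  "(x,y) \<in># S \<Longrightarrow> G3I S G (D + {#(x,A), (y,A)#}) \<Longrightarrow> G3I S G (add_mset (y,A) D)"
proof (induction A arbitrary: x y S G D)
  case (Atm P)
  then show ?case by (intro G3I_R_prec_Atm_Bot[OF Atm.prems(2) Atm.prems(1) refl]) simp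
next
  case Bot
  then show ?case by (intro G3I_R_prec_Atm_Bot[OF Bot.prems(2) Bot.prems(1) refl]) simp
next
  case (Conj B C)
  have "G3I S G (add_mset (y,F) (add_mset (x,F) D))" if "F \<in> {B, C}" for F
  proof -
    have "G3I S G (add_mset (x,F) (add_mset (y, Conj B C) D))"
      by (rule G3I_RConj_inv[OF Conj.prems(2) _ that]) (simp add: add_mset_commute)
    then show ?thesis
      by (rule G3I_RConj_inv[OF _ _ that]) (simp add: add_mset_commute)
  qed
  then have "G3I S G (add_mset (y,B) D)" "G3I S G (add_mset (y,C) D)"
    using Conj.IH[OF Conj.prems(1)] by (simp_all add: add_mset_commute)
  then show ?case
    by (rule G3I.RConj)
next
  case (Disj B C)
  have "G3I S G (add_mset (x,B) (add_mset (x,C) (add_mset (y, Disj B C) D)))"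
    by (rule G3I_RDisj_inv[OF Disj.prems(2)]) (simp add: add_mset_commute)
  then have "G3I S G (add_mset (y,B) (add_mset (y,C) (add_mset (x,B) (add_mset (x,C) D))))"
    by (rule G3I_RDisj_inv) (simp add: add_mset_commute)
  then have "G3I S G (add_mset (y,B) (add_mset (y,C) (add_mset (x,C) D)))"
    using Disj.IH(1)[OF Disj.prems(1), where D = "add_mset (y,C) (add_mset (x,C) D)"] by (simp add: add_mset_commute)
  then have "G3I S G (add_mset (y,C) (add_mset (y,B) D))"
    using Disj.IH(2)[OF Disj.prems(1), where D = "add_mset (y,B) D"] by (simp add: add_mset_commute)
  then show ?case
    by (intro G3I.RDisj) (simp add: add_mset_commute)
next
  case (Imp B C)
  have xy: "x \<in> labels_rel S" "y \<in> labels_rel S"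
    using Imp.prems(1) mem_labels_rel by blast+
  obtain v where v: "v \<notin> labels_rel S \<union> labels_fm G \<union> labels_fm D"
    using obtain_fresh_label by (metis finite_Un finite_labels)
  have inv_y: "G3I (add_mset (y,v) S) (add_mset (v,B) G) (add_mset (v,C) (add_mset (x, Imp B C) D))"
    by (rule G3I_RImp_inv[OF Imp.prems(2)]) (use v xy in \<open>auto simp: add_mset_commute\<close>)
  obtain w where w: "w \<notin> labels_rel S \<union> labels_fm G \<union> labels_fm D \<union> {v}"
    using obtain_fresh_label by (metis finite_Un finite_labels finite.emptyI finite.insertI)
  have inv_xy: "G3I (add_mset (x,w) (add_mset (y,v) S)) (add_mset (w,B) (add_mset (v,B) G))
      (add_mset (w,C) (add_mset (v,C) D))"
    by (rule G3I_RImp_inv[OF inv_y]) (use v w xy in auto)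
  \<comment> \<open>identifying the two eigenvariables duplicates v : B and v : C, which L\<prec> and the
     induction hypothesis for C contract, instantiated with the reflexive atom v \<prec> v\<close>
  define f where "f = id(w := v)"
  let ?S = "add_mset (v,v) (add_mset (x,v) (add_mset (y,v) S))"
  have "G3I (add_mset (y,v) S + image_mset (map_prod f f) {#(x,w)#})
      (add_mset (v,B) G + image_mset (apfst f) {#(w,B)#}) (add_mset (v,C) D + image_mset (apfst f) {#(w,C)#})"
    by (rule G3I_rename) (use inv_xy w xy in \<open>auto simp: f_def\<close>)
  moreover have "f x = x" "f w = v"
    using xy w by (auto simp: f_def)
  ultimately have "G3I ?S (G + {#(v,B), (v,B)#}) (D + {#(v,C), (v,C)#})"
    using G3I_weaken_rel by (simp add: add_mset_commute)
  then have "G3I ?S (add_mset (v,B) G) (D + {#(v,C), (v,C)#})"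
    by (rule G3I_L_prec[rotated]) simp
  then have "G3I ?S (add_mset (v,B) G) (add_mset (v,C) D)"
    by (rule Imp.IH(2)[rotated]) simp
  then have "G3I (add_mset (x,v) (add_mset (y,v) S)) (add_mset (v,B) G) (add_mset (v,C) D)"
    by (rule G3I.Refl)
  then have "G3I (add_mset (y,v) S) (add_mset (v,B) G) (add_mset (v,C) D)"
    by (rule G3I_trans_mem[where y=y]) (use Imp.prems(1) in auto)
  with v xy show ?case
    by (intro G3I.RImp) auto
qed

theorem mainTheorem2:
  shows "(\<forall>x y S G D A. G3I (add_mset (x,y) S) (G + {#(x,A), (y,A)#}) D
            \<longrightarrow> G3I (add_mset (x,y) S) (add_mset (x,A) G) D)
       \<and> (\<forall>x y S G D A. G3I (add_mset (x,y) S) G (D + {#(x,A), (y,A)#})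
            \<longrightarrow> G3I (add_mset (x,y) S) G (add_mset (y,A) D))"
  by (auto intro: G3I_L_prec G3I_R_prec)

end
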